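(* Let $n,m\ge 4$ be integers with $n\equiv 0\pmod 4$ and $m\equiv 0 \pmod 4$. Then $\gamma_t(C_n\times C_m)=\gamma_p(C_n\times C_m)=\frac{nm}{4}$.
   Context: All graphs are finite, simple and undirected. $C_n$ denotes the cycle of order $n$ and $G\times H$ the Cartesian product of graphs. For a graph $G$ without isolated vertices: a set $D\subseteq V(G)$ is a total dominating set if every vertex of $G$ (including those in $D$) has a neighbour in $D$; $\gamma_t(G)$ is the minimum size of a total dominating set. A set $D\subseteq V(G)$ is a paired dominating set if every vertex outside $D$ has a neighbour in $D$ and the induced subgraph $G[D]$ has a perfect matching; $\gamma_p(G)$ is the minimum size of a paired dominating set. *)

theory Defs
  imports Main
begin

text \<open>A (finite simple) graph is given by a vertex set V and a symmetric,
irreflexive adjacency relation E on V.\<close>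

definition cycle_adj :: "nat \<Rightarrow> nat \<Rightarrow> nat \<Rightarrow> bool" where
  "cycle_adj n i j \<longleftrightarrow> i < n \<and> j < n \<and> (j = (i + 1) mod n \<or> i = (j + 1) mod n)"

definition cycle_V :: "nat \<Rightarrow> nat set" where
  "cycle_V n = {0..<n}"

definition cart_V :: "'a set \<Rightarrow> 'b set \<Rightarrow> ('a \<times> 'b) set" where
  "cart_V V1 V2 = V1 \<times> V2"

definition cart_adj :: "('a \<Rightarrow> 'a \<Rightarrow> bool) \<Rightarrow> ('b \<Rightarrow> 'b \<Rightarrow> bool) \<Rightarrow> ('a \<times> 'b) \<Rightarrow> ('a \<times> 'b) \<Rightarrow> bool" where
  "cart_adj E1 E2 x y \<longleftrightarrow> (fst x = fst y \<and> E2 (snd x) (snd y)) \<or> (snd x = snd y \<and> E1 (fst x) (fst y))"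

definition total_dominating :: "'a set \<Rightarrow> ('a \<Rightarrow> 'a \<Rightarrow> bool) \<Rightarrow> 'a set \<Rightarrow> bool" where
  "total_dominating V E D \<longleftrightarrow> D \<subseteq> V \<and> (\<forall>v\<in>V. \<exists>u\<in>D. E v u)"

definition gamma_t :: "'a set \<Rightarrow> ('a \<Rightarrow> 'a \<Rightarrow> bool) \<Rightarrow> nat" where
  "gamma_t V E = Min (card ` {D. total_dominating V E D})"

definition perfect_matching_induced :: "('a \<Rightarrow> 'a \<Rightarrow> bool) \<Rightarrow> 'a set \<Rightarrow> 'a set set \<Rightarrow> bool" where
  "perfect_matching_induced E D M \<longleftrightarrow>
     (\<forall>e\<in>M. \<exists>u v. e = {u, v} \<and> u \<in> D \<and> v \<in> D \<and> E u v) \<and>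
     (\<forall>e\<in>M. \<forall>e'\<in>M. e \<noteq> e' \<longrightarrow> e \<inter> e' = {}) \<and>
     \<Union>M = D"

definition paired_dominating :: "'a set \<Rightarrow> ('a \<Rightarrow> 'a \<Rightarrow> bool) \<Rightarrow> 'a set \<Rightarrow> bool" where
  "paired_dominating V E D \<longleftrightarrow> D \<subseteq> V \<and> (\<forall>v\<in>V - D. \<exists>u\<in>D. E v u) \<and>
     (\<exists>M. perfect_matching_induced E D M)"

definition gamma_p :: "'a set \<Rightarrow> ('a \<Rightarrow> 'a \<Rightarrow> bool) \<Rightarrow> nat" where
  "gamma_p V E = Min (card ` {D. paired_dominating V E D})"

end

theory Submission
  imports Defs
begin

text \<open>Every vertex of the torus \<open>C\<^sub>n \<times> C\<^sub>m\<close> has at most four neighbours, so a total dominating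
set has at least \<open>nm/4\<close> vertices, and a paired dominating set is in particular total.
Conversely, when 4 divides \<open>n\<close> and \<open>m\<close>, reduction mod 4 maps \<open>C\<^sub>n \<times> C\<^sub>m\<close> onto \<open>C\<^sub>4 \<times> C\<^sub>4\<close> and
every edge at the image of a vertex lifts to an edge at that vertex. Hence the preimage of the
total dominating set \<open>{(0,0), (0,1), (2,2), (2,3)}\<close> of \<open>C\<^sub>4 \<times> C\<^sub>4\<close> is a total dominating set of size
\<open>nm/4\<close>; matching \<open>(a, 2j)\<close> with \<open>(a, 2j + 1)\<close> shows that it is paired dominating as well.\<close>

lemma cycle_adj_sym: "cycle_adj n i j \<Longrightarrow> cycle_adj n j i"
  unfolding cycle_adj_def by blast

lemma cycle_adj_iff:
  assumes "i < n"
  shows "cycle_adj n i j \<longleftrightarrow> j = (i + 1) mod n \<or> j = (i + n - 1) mod n"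
proof
  assume "cycle_adj n i j"
  then have "j < n" and "j = (i + 1) mod n \<or> i = (j + 1) mod n"
    by (auto simp: cycle_adj_def)
  moreover have "j = (i + n - 1) mod n" if "i = (j + 1) mod n"
  proof (cases "j + 1 < n")
    case True
    with that show ?thesis by simp
  next
    case False
    with \<open>j < n\<close> have "n = j + 1" by simp
    with that show ?thesis by simp
  qed
  ultimately show "j = (i + 1) mod n \<or> j = (i + n - 1) mod n" by blast
next
  assume "j = (i + 1) mod n \<or> j = (i + n - 1) mod n"
  moreover have "((i + n - 1) mod n + 1) mod n = i"
    using assms by (simp add: mod_simps)
  ultimately show "cycle_adj n i j"
    using assms by (auto simp: cycle_adj_def)
qed

lemma card_residue_class:
  assumes "k dvd n" "r < k"
  shows "card {i. i < n \<and> i mod k = r} = n div k"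
proof -
  have "{i. i < n \<and> i mod k = r} = (\<lambda>q. k * q + r) ` {..<n div k}"
  proof (intro set_eqI iffI)
    fix i assume i: "i \<in> {i. i < n \<and> i mod k = r}"
    then have "i = k * (i div k) + r" using mult_div_mod_eq[of k i] by simp
    moreover have "i div k < n div k"
      using i assms by (metis less_mult_imp_div_less mult.commute dvd_mult_div_cancel mem_Collect_eq)
    ultimately show "i \<in> (\<lambda>q. k * q + r) ` {..<n div k}" by blast
  next
    fix i assume "i \<in> (\<lambda>q. k * q + r) ` {..<n div k}"
    then obtain q where q: "q < n div k" "i = k * q + r" by auto
    then have "k * q + k \<le> n"
      using assms by (metis Suc_leI dvd_mult_div_cancel mult_Suc_right mult_le_mono2 add.commute)
    with q assms show "i \<in> {i. i < n \<and> i mod k = r}" by auto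
  qed
  moreover have "inj_on (\<lambda>q. k * q + r) {..<n div k}"
    using assms by (auto simp: inj_on_def)
  ultimately show ?thesis by (simp add: card_image)
qed

lemma card_le_total_dominating:
  assumes "total_dominating V E D" "finite V"
    and deg: "\<And>u. u \<in> D \<Longrightarrow> card {v \<in> V. E v u} \<le> k"
  shows "card V \<le> k * card D"
proof -
  have "finite D" using assms(1,2) by (auto simp: total_dominating_def intro: finite_subset)
  have "V = (\<Union>u\<in>D. {v \<in> V. E v u})" using assms(1) by (auto simp: total_dominating_def)
  then have "card V \<le> (\<Sum>u\<in>D. card {v \<in> V. E v u})"
    using card_UN_le[OF \<open>finite D\<close>] by metis
  also have "\<dots> \<le> (\<Sum>u\<in>D. k)" by (rule sum_mono) (rule deg)
  finally show ?thesis by (simp add: mult.commute)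
qed

lemma paired_dominating_imp_total_dominating:
  assumes "symp E" "paired_dominating V E D"
  shows "total_dominating V E D"
proof -
  obtain M where M: "perfect_matching_induced E D M"
    using assms(2) by (auto simp: paired_dominating_def)
  have "\<exists>u\<in>D. E v u" if "v \<in> D" for v
  proof -
    from M that obtain e where "e \<in> M" "v \<in> e"
      unfolding perfect_matching_induced_def by blast
    with M obtain x y where "e = {x, y}" "x \<in> D" "y \<in> D" "E x y"
      unfolding perfect_matching_induced_def by blast
    with \<open>v \<in> e\<close> assms(1) show ?thesis by (auto dest: sympD)
  qed
  with assms(2) show ?thesis
    by (auto simp: paired_dominating_def total_dominating_def)
qed

lemma perfect_matching_induced_involution:
  assumes p: "\<And>v. v \<in> D \<Longrightarrow> p v \<in> D \<and> p (p v) = v \<and> p v \<noteq> v \<and> E v (p v)"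
  shows "perfect_matching_induced E D ((\<lambda>v. {v, p v}) ` D)"
  unfolding perfect_matching_induced_def
proof (intro conjI ballI impI)
  fix e assume "e \<in> (\<lambda>v. {v, p v}) ` D"
  then obtain v where "v \<in> D" "e = {v, p v}" by blast
  with p show "\<exists>u v. e = {u, v} \<and> u \<in> D \<and> v \<in> D \<and> E u v" by blast
next
  fix e e' assume "e \<in> (\<lambda>v. {v, p v}) ` D" "e' \<in> (\<lambda>v. {v, p v}) ` D" "e \<noteq> e'"
  obtain v w where "v \<in> D" "e = {v, p v}" "w \<in> D" "e' = {w, p w}"
    using \<open>e \<in> _\<close> \<open>e' \<in> _\<close> by (elim imageE)
  have "p (p v) = v" "p (p w) = w" using p \<open>v \<in> D\<close> \<open>w \<in> D\<close> by blast+
  show "e \<inter> e' = {}"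
  proof (rule ccontr)
    assume "e \<inter> e' \<noteq> {}"
    then obtain x where "x = v \<or> x = p v" "x = w \<or> x = p w"
      using \<open>e = {v, p v}\<close> \<open>e' = {w, p w}\<close> by blast
    then have "w = v \<or> w = p v" using \<open>p (p v) = v\<close> \<open>p (p w) = w\<close> by metis
    then have "e' = e" using \<open>e = {v, p v}\<close> \<open>e' = {w, p w}\<close> \<open>p (p v) = v\<close>
      by (elim disjE) (simp_all add: insert_commute)
    with \<open>e \<noteq> e'\<close> show False by simp
  qed
next
  show "\<Union> ((\<lambda>v. {v, p v}) ` D) = D" using p by blast
qed

lemma Min_card_eqI:
  assumes "finite V" "\<And>D. P D \<Longrightarrow> D \<subseteq> V" "\<And>D. P D \<Longrightarrow> c \<le> card D"
    and "P D\<^sub>0" "card D\<^sub>0 = c"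
  shows "Min (card ` {D. P D}) = c"
proof (rule Min_eqI)
  have "{D. P D} \<subseteq> Pow V" using assms(2) by blast
  then show "finite (card ` {D. P D})"
    using assms(1) by (meson finite_Pow_iff finite_imageI finite_subset)
next
  show "c \<le> x" if "x \<in> card ` {D. P D}" for x using that assms(3) by blast
next
  show "c \<in> card ` {D. P D}" using assms(4,5) by blast
qed

abbreviation torus_V :: "nat \<Rightarrow> nat \<Rightarrow> (nat \<times> nat) set" where
  "torus_V n m \<equiv> cart_V (cycle_V n) (cycle_V m)"

abbreviation torus_adj :: "nat \<Rightarrow> nat \<Rightarrow> nat \<times> nat \<Rightarrow> nat \<times> nat \<Rightarrow> bool" where
  "torus_adj n m \<equiv> cart_adj (cycle_adj n) (cycle_adj m)"

abbreviation torus_mod :: "nat \<Rightarrow> nat \<Rightarrow> nat \<times> nat \<Rightarrow> nat \<times> nat" where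
  "torus_mod k l \<equiv> map_prod (\<lambda>a. a mod k) (\<lambda>b. b mod l)"

lemma mem_torus_V [simp]: "(a, b) \<in> torus_V n m \<longleftrightarrow> a < n \<and> b < m"
  by (simp add: cart_V_def cycle_V_def)

lemma finite_torus_V: "finite (torus_V n m)"
  by (simp add: cart_V_def cycle_V_def)

lemma symp_torus_adj: "symp (torus_adj n m)"
  by (auto intro!: sympI simp: cart_adj_def dest: cycle_adj_sym)

lemma card_torus_neighbours:
  assumes "u \<in> torus_V n m"
  shows "card {v \<in> torus_V n m. torus_adj n m v u} \<le> 4"
proof -
  obtain a b where u: "u = (a, b)" "a < n" "b < m" using assms by (cases u) auto
  let ?N = "[((a + 1) mod n, b), ((a + n - 1) mod n, b), (a, (b + 1) mod m), (a, (b + m - 1) mod m)]"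
  have "v \<in> set ?N" if "torus_adj n m v u" for v
  proof -
    obtain c d where v: "v = (c, d)" by (cases v)
    from that have "torus_adj n m u v" using symp_torus_adj by (metis sympD)
    then have "a = c \<and> cycle_adj m b d \<or> b = d \<and> cycle_adj n a c"
      by (simp add: u v cart_adj_def)
    then show ?thesis
      using cycle_adj_iff[OF u(2)] cycle_adj_iff[OF u(3)] by (auto simp: v)
  qed
  then have "card {v \<in> torus_V n m. torus_adj n m v u} \<le> card (set ?N)"
    by (intro card_mono) auto
  also have "\<dots> \<le> 4" using card_length[of ?N] by simp
  finally show ?thesis .
qed

lemma cycle_adj_lift_mod:
  assumes "k dvd n" "a < n" "cycle_adj k (a mod k) r"
  shows "\<exists>a'. cycle_adj n a a' \<and> a' mod k = r"
proof -
  have "0 < k" using assms(3) by (auto simp: cycle_adj_def)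
  obtain c where "n = k * c" using assms(1) by (elim dvdE)
  moreover from this assms(2) have "c \<noteq> 0" by (auto intro: gr0I)
  ultimately obtain q where n: "n = k * Suc q" by (cases c) auto
  have "a + n - 1 = (a + (k - 1)) + k * q"
    using n \<open>0 < k\<close> by simp
  then have "(a + n - 1) mod k = (a mod k + (k - 1)) mod k"
    by (simp add: mod_simps)
  then have pred: "(a + n - 1) mod n mod k = (a mod k + k - 1) mod k"
    using assms(1) \<open>0 < k\<close> by (simp add: mod_mod_cancel)
  have succ: "(a + 1) mod n mod k = (a mod k + 1) mod k"
    using assms(1) by (simp add: mod_mod_cancel mod_simps)
  from assms(3) \<open>0 < k\<close> have "r = (a mod k + 1) mod k \<or> r = (a mod k + k - 1) mod k"
    by (simp add: cycle_adj_iff)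
  then show ?thesis
    using pred succ assms(2) cycle_adj_iff[OF assms(2)] by blast
qed

lemma torus_adj_lift_mod:
  assumes "k dvd n" "l dvd m" "v \<in> torus_V n m" "torus_adj k l (torus_mod k l v) w"
  shows "\<exists>u \<in> torus_V n m. torus_adj n m v u \<and> torus_mod k l u = w"
proof -
  obtain a b where v: "v = (a, b)" "a < n" "b < m" using assms(3) by (cases v) auto
  obtain r s where w: "w = (r, s)" by (cases w)
  have "a mod k = r \<and> cycle_adj l (b mod l) s \<or> b mod l = s \<and> cycle_adj k (a mod k) r"
    using assms(4) v w by (simp add: cart_adj_def)
  then show ?thesis
  proof
    assume "a mod k = r \<and> cycle_adj l (b mod l) s"
    then obtain b' where "cycle_adj m b b'" "b' mod l = s" "a mod k = r"
      using cycle_adj_lift_mod[OF assms(2) v(3)] by blast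
    then show ?thesis
      using v w by (intro bexI[of _ "(a, b')"]) (auto simp: cart_adj_def cycle_adj_def)
  next
    assume "b mod l = s \<and> cycle_adj k (a mod k) r"
    then obtain a' where "cycle_adj n a a'" "a' mod k = r" "b mod l = s"
      using cycle_adj_lift_mod[OF assms(1) v(2)] by blast
    then show ?thesis
      using v w by (intro bexI[of _ "(a', b)"]) (auto simp: cart_adj_def cycle_adj_def)
  qed
qed

lemma total_dominating_torus_lift:
  assumes "k dvd n" "l dvd m" "total_dominating (torus_V k l) (torus_adj k l) D"
  shows "total_dominating (torus_V n m) (torus_adj n m) (torus_V n m \<inter> torus_mod k l -` D)"
  unfolding total_dominating_def
proof (intro conjI ballI)
  fix v assume v: "v \<in> torus_V n m"
  moreover have "0 < k" "0 < l"
    using assms(1,2) v by (cases v; auto intro!: gr0I)+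
  ultimately have "torus_mod k l v \<in> torus_V k l" by (cases v) auto
  then obtain w where "w \<in> D" "torus_adj k l (torus_mod k l v) w"
    using assms(3) by (auto simp: total_dominating_def)
  then show "\<exists>u \<in> torus_V n m \<inter> torus_mod k l -` D. torus_adj n m v u"
    using torus_adj_lift_mod[OF assms(1,2) v] by fastforce
qed auto

lemma card_torus_lift:
  assumes "k dvd n" "l dvd m" "D \<subseteq> torus_V k l"
  shows "card (torus_V n m \<inter> torus_mod k l -` D) = card D * (n div k * (m div l))"
proof -
  define cell where "cell w = {a. a < n \<and> a mod k = fst w} \<times> {b. b < m \<and> b mod l = snd w}" for w
  have "finite D" using assms(3) finite_torus_V finite_subset by blast
  have "torus_V n m \<inter> torus_mod k l -` D = (\<Union>w\<in>D. cell w)"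
    by (auto simp: cell_def cart_V_def cycle_V_def)
  also have "card \<dots> = (\<Sum>w\<in>D. card (cell w))"
    using \<open>finite D\<close> by (intro card_UN_disjoint) (auto simp: cell_def)
  also have "\<dots> = (\<Sum>w\<in>D. n div k * (m div l))"
    using assms by (intro sum.cong) (auto simp: cell_def card_cartesian_product card_residue_class)
  finally show ?thesis by simp
qed

lemma card_total_dominating_torus:
  assumes "total_dominating (torus_V n m) (torus_adj n m) D"
  shows "n * m \<le> 4 * card D"
proof -
  have "D \<subseteq> torus_V n m" using assms by (simp add: total_dominating_def)
  then have "card (torus_V n m) \<le> 4 * card D"
    using card_le_total_dominating[OF assms finite_torus_V] card_torus_neighbours by blast
  then show ?thesis by (simp add: cart_V_def cycle_V_def card_cartesian_product)
qed

definition torus_pattern :: "(nat \<times> nat) set" where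
  "torus_pattern = {(0, 0), (0, 1), (2, 2), (2, 3)}"

lemma total_dominating_torus_pattern:
  "total_dominating (torus_V 4 4) (torus_adj 4 4) torus_pattern"
proof -
  have "{0..<4} = {0, 1, 2, 3 :: nat}" by auto
  then show ?thesis
    by (simp add: total_dominating_def torus_pattern_def cart_V_def cycle_V_def cart_adj_def cycle_adj_def)
qed

definition partner :: "nat \<times> nat \<Rightarrow> nat \<times> nat" where
  "partner v = (fst v, if even (snd v) then snd v + 1 else snd v - 1)"

lemma partner_torus_pattern:
  assumes "even m" "v \<in> torus_V n m \<inter> torus_mod 4 4 -` torus_pattern"
  shows "partner v \<in> torus_V n m \<inter> torus_mod 4 4 -` torus_pattern \<and>
    partner (partner v) = v \<and> partner v \<noteq> v \<and> torus_adj n m v (partner v)"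
proof -
  obtain a b where v: "v = (a, b)" "a < n" "b < m"
    and pat: "(a mod 4, b mod 4) \<in> torus_pattern" using assms(2) by (cases v) auto
  have "b mod 4 = 0 \<or> b mod 4 = 1 \<or> b mod 4 = 2 \<or> b mod 4 = 3" by linarith
  moreover have "even b \<longleftrightarrow> even (b mod 4)" by (simp add: even_iff_mod_2_eq_zero mod_mod_cancel)
  ultimately consider (even) "even b" "b mod 4 = 0 \<or> b mod 4 = 2"
    | (odd) "odd b" "b mod 4 = 1 \<or> b mod 4 = 3"
    by fastforce
  then show ?thesis
  proof cases
    case even
    have "b + 1 \<noteq> m" using even(1) assms(1) by auto
    with v(3) have "b + 1 < m" by linarith
    moreover have "(b + 1) mod 4 = b mod 4 + 1" using even(2) by (auto simp: mod_Suc)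
    ultimately show ?thesis
      using even pat v by (auto simp: partner_def torus_pattern_def cart_adj_def cycle_adj_def)
  next
    case odd
    have "b \<noteq> 0" using odd(1) by (auto intro: gr0I)
    then have "(b - 1) mod 4 = b mod 4 - 1" using odd(2) by (cases b) (auto simp: mod_Suc)
    with odd pat v \<open>b \<noteq> 0\<close> show ?thesis
      by (auto simp: partner_def torus_pattern_def cart_adj_def cycle_adj_def)
  qed
qed

lemma paired_dominating_torus_lift_pattern:
  assumes "4 dvd n" "4 dvd m"
  shows "paired_dominating (torus_V n m) (torus_adj n m) (torus_V n m \<inter> torus_mod 4 4 -` torus_pattern)"
    (is "paired_dominating _ _ ?D")
proof -
  have total: "total_dominating (torus_V n m) (torus_adj n m) ?D"
    by (rule total_dominating_torus_lift[OF assms total_dominating_torus_pattern])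
  have "even m" using assms(2) by (auto elim: dvdE)
  then have "perfect_matching_induced (torus_adj n m) ?D ((\<lambda>v. {v, partner v}) ` ?D)"
    by (intro perfect_matching_induced_involution partner_torus_pattern)
  with total show ?thesis
    unfolding paired_dominating_def total_dominating_def by blast
qed

lemma card_torus_lift_pattern:
  assumes "4 dvd n" "4 dvd m"
  shows "card (torus_V n m \<inter> torus_mod 4 4 -` torus_pattern) = n * m div 4"
proof -
  obtain i j where "n = 4 * i" "m = 4 * j" using assms by (elim dvdE)
  moreover have "card torus_pattern = 4" by (simp add: torus_pattern_def)
  ultimately show ?thesis
    using card_torus_lift[OF assms, of torus_pattern] by (simp add: torus_pattern_def)
qed

theorem lemma2p3:
  fixes n m :: nat
  assumes "n \<ge> 4" and "m \<ge> 4" and "n mod 4 = 0" and "m mod 4 = 0"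
  shows "gamma_t (cart_V (cycle_V n) (cycle_V m)) (cart_adj (cycle_adj n) (cycle_adj m)) = n * m div 4
       \<and> gamma_p (cart_V (cycle_V n) (cycle_V m)) (cart_adj (cycle_adj n) (cycle_adj m)) = n * m div 4"
proof -
  have dvd: "4 dvd n" "4 dvd m" using assms(3,4) by auto
  let ?D = "torus_V n m \<inter> torus_mod 4 4 -` torus_pattern"
  have lower: "n * m div 4 \<le> card D" if "total_dominating (torus_V n m) (torus_adj n m) D" for D
    using div_le_mono[OF card_total_dominating_torus[OF that], of 4] by simp
  have paired: "paired_dominating (torus_V n m) (torus_adj n m) ?D"
    by (rule paired_dominating_torus_lift_pattern[OF dvd])
  note paired_total = paired_dominating_imp_total_dominating[OF symp_torus_adj]
  have "gamma_t (torus_V n m) (torus_adj n m) = n * m div 4"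
    unfolding gamma_t_def
    by (rule Min_card_eqI[where P = "total_dominating (torus_V n m) (torus_adj n m)",
          OF finite_torus_V[of n m] _ lower paired_total[OF paired] card_torus_lift_pattern[OF dvd]])
      (simp add: total_dominating_def)
  moreover have "gamma_p (torus_V n m) (torus_adj n m) = n * m div 4"
    unfolding gamma_p_def
    by (rule Min_card_eqI[where P = "paired_dominating (torus_V n m) (torus_adj n m)",
          OF finite_torus_V[of n m] _ lower[OF paired_total] paired
          card_torus_lift_pattern[OF dvd]])
      (simp add: paired_dominating_def)
  ultimately show ?thesis by blast
qed

end
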